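(* Let $C_{BZ}\subset V_{BZ}$ be the cone of BZ labellings with all nine coordinates nonnegative. Then $C_{BZ}$ has exactly eight extreme rays, spanned by the eight fundamental BZ triangles $\hat C_1,\hat C_2,\hat C_3,\hat D_1,\hat D_3,\hat D_5,\hat P,\hat Q$; these eight vectors generate the lattice $\Lambda_{BZ}$ as an abelian group, and the only linear relation among them (up to scaling) is $\hat D_1+\hat D_3+\hat D_5=\hat P+\hat Q$. The group $G_{BZ}$ of all group automorphisms of $\Lambda_{BZ}$ mapping the set of BZ triangles onto itself has order $72$; restriction to the fundamental BZ triangles identifies $G_{BZ}$ with the group of permutations of these eight vectors that map each of $\{\hat C_1,\hat C_2,\hat C_3\}$, $\{\hat D_1,\hat D_3,\hat D_5\}$, $\{\hat P,\hat Q\}$ to itself, so $G_{BZ}\cong\mathfrak{S}_3\times\mathfrak{S}_3\times\mathfrak{S}_2$.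
   Context: A BZ labelling is a vector $(y_1,y_2,y_3,z_1,\dots,z_6)\in\mathbb{R}^9$ satisfying $z_1-z_4=z_5-z_2=z_3-z_6$; these form a 7-dimensional subspace $V_{BZ}\subset\mathbb{R}^9$. Let $\Lambda_{BZ}=V_{BZ}\cap\mathbb{Z}^9$. A BZ triangle ($SU(3)$ Berenstein–Zelevinsky triangle) is an element of $\Lambda_{BZ}$ with all coordinates nonnegative. The fundamental BZ triangles are: $\hat C_i$ ($i=1,2,3$) with $y_i=1$ and all other coordinates $0$; $\hat D_1$ with $z_1=z_4=1$, others $0$; $\hat D_3$ with $z_3=z_6=1$, others $0$; $\hat D_5$ with $z_2=z_5=1$, others $0$; $\hat P$ with $z_1=z_3=z_5=1$, others $0$; $\hat Q$ with $z_2=z_4=z_6=1$, others $0$. *)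

theory Defs
  imports "HOL-Analysis.Analysis"
begin

text \<open>Coordinates of a vector x :: real^9 in the order
  (y1,y2,y3,z1,z2,z3,z4,z5,z6) = (x$1,...,x$9).\<close>

definition V_BZ :: "(real^9) set" where
  "V_BZ = {x. x$4 - x$7 = x$8 - x$5 \<and> x$8 - x$5 = x$6 - x$9}"

definition Lambda_BZ :: "(real^9) set" where
  "Lambda_BZ = {x \<in> V_BZ. \<forall>i. x$i \<in> \<int>}"

definition C_BZ :: "(real^9) set" where
  "C_BZ = {x \<in> V_BZ. \<forall>i. 0 \<le> x$i}"

definition BZ_triangles :: "(real^9) set" where
  "BZ_triangles = {x \<in> Lambda_BZ. \<forall>i. 0 \<le> x$i}"

definition C1 :: "real^9" where "C1 = axis 1 1"
definition C2 :: "real^9" where "C2 = axis 2 1"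
definition C3 :: "real^9" where "C3 = axis 3 1"
definition D1 :: "real^9" where "D1 = axis 4 1 + axis 7 1"
definition D3 :: "real^9" where "D3 = axis 6 1 + axis 9 1"
definition D5 :: "real^9" where "D5 = axis 5 1 + axis 8 1"
definition P  :: "real^9" where "P = axis 4 1 + axis 6 1 + axis 8 1"
definition Q  :: "real^9" where "Q = axis 5 1 + axis 7 1 + axis 9 1"

definition fund :: "nat \<Rightarrow> real^9" where
  "fund i = [C1, C2, C3, D1, D3, D5, P, Q] ! i"

text \<open>Coefficients of the relation D1 + D3 + D5 - P - Q = 0.\<close>
definition rel_coeff :: "nat \<Rightarrow> real" where
  "rel_coeff i = [0, 0, 0, 1, 1, 1, -1, -1] ! i"

definition ray :: "real^9 \<Rightarrow> (real^9) set" where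
  "ray v = {t *\<^sub>R v | t. 0 \<le> t}"

definition extreme_ray_of :: "(real^9) set \<Rightarrow> (real^9) set \<Rightarrow> bool" where
  "extreme_ray_of R K \<longleftrightarrow> (\<exists>v. v \<noteq> 0 \<and> R = ray v) \<and> R face_of K"

definition G_BZ :: "(real^9 \<Rightarrow> real^9) set" where
  "G_BZ = {f. f \<in> extensional Lambda_BZ \<and> bij_betw f Lambda_BZ Lambda_BZ
              \<and> (\<forall>x\<in>Lambda_BZ. \<forall>y\<in>Lambda_BZ. f (x + y) = f x + f y)
              \<and> f ` BZ_triangles = BZ_triangles}"

definition block_perms :: "(nat \<Rightarrow> nat) set" where
  "block_perms = {\<sigma>. \<sigma> permutes {..<8} \<and> \<sigma> ` {0,1,2} = {0,1,2}
                     \<and> \<sigma> ` {3,4,5} = {3,4,5} \<and> \<sigma> ` {6,7} = {6,7}}"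

end

theory Submission
  imports Defs
begin

(*
  Every BZ labelling x is a combination of the eight fundamental triangles with
  coefficients read off from its coordinates: y1, y2, y3 for the C's, min(z1,z4),
  min(z3,z6), min(z2,z5) for the D's, and the positive and negative parts of z1 - z4
  (= z5 - z2 = z3 - z6) for P and Q. These coefficients are nonnegative on the cone and
  integral on the lattice, which gives generation; comparing coordinates gives the
  single relation D1 + D3 + D5 = P + Q.

  A vector of the cone vanishing wherever a fundamental triangle vanishes is a multiple
  of it, so each fundamental triangle spans a face; conversely, an extreme ray contains
  every summand of its generator, in particular some positive multiple of a fundamental
  triangle.

  An automorphism of the lattice preserving the BZ triangles permutes the indecomposable
  triangles, which are exactly the fundamental ones, and it maps the relation to a
  relation, hence to a multiple of itself; comparing coefficient sums shows the multiple
  is 1, so the permutation preserves the three blocks. Conversely a block permutation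
  fixes the relation, so sum c_i fund i |-> sum c_i fund (sigma i) is well defined, and an
  automorphism is determined by its values on the generators. There are 3!*3!*2! = 72
  block permutations.
*)

section \<open>Permutations\<close>

lemma inj_on_self_map_induces_permutes:
  assumes "finite A" "inj_on e A" "inj_on f (e ` A)" "f ` e ` A \<subseteq> e ` A"
  obtains \<sigma> where "\<sigma> permutes A" "\<forall>i\<in>A. f (e i) = e (\<sigma> i)"
proof -
  define g where "g = inv_into A e \<circ> f \<circ> e"
  have g_into: "g i \<in> A" and e_g: "e (g i) = f (e i)" if "i \<in> A" for i
  proof -
    have "f (e i) \<in> e ` A"
      using that assms(4) by blast
    then show "g i \<in> A" "e (g i) = f (e i)"
      by (simp_all add: g_def inv_into_into f_inv_into_f)
  qed
  have "inj_on g A"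
    by (rule inj_onI) (metis assms(2,3) e_g image_eqI inj_on_def)
  then have "bij_betw g A A"
    using g_into assms(1) by (intro bij_betw_imageI endo_inj_surj) auto
  then have "restrict_id g A permutes A"
    by (rule permutes_restrict_id)
  then show ?thesis
    by (rule that) (simp add: e_g)
qed

lemma permutes_image_fibre:
  assumes "\<sigma> permutes A" "\<forall>i\<in>A. g (\<sigma> i) = g i"
  shows "\<sigma> ` {i\<in>A. g i = r} = {i\<in>A. g i = r}"
proof
  show "\<sigma> ` {i\<in>A. g i = r} \<subseteq> {i\<in>A. g i = r}"
    using assms permutes_in_image by fastforce
  show "{i\<in>A. g i = r} \<subseteq> \<sigma> ` {i\<in>A. g i = r}"
  proof
    fix j assume j: "j \<in> {i\<in>A. g i = r}"
    then have "inv \<sigma> j \<in> A" "\<sigma> (inv \<sigma> j) = j"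
      using assms(1) permutes_in_image[OF permutes_inv] permutes_inverses(1) by fastforce+
    then show "j \<in> \<sigma> ` {i\<in>A. g i = r}"
      using j assms(2) by (metis (mono_tags, lifting) image_eqI mem_Collect_eq)
  qed
qed

lemma restrict_id_compose_disjoint_permutes:
  assumes "A \<inter> B = {}" "a permutes A" "b permutes B"
  shows "restrict_id (a \<circ> b) A = a" "restrict_id (a \<circ> b) B = b"
  using assms permutes_not_in permutes_in_image by (fastforce simp: fun_eq_iff restrict_id_def)+

lemma permutes_Un_image_eq:
  assumes "A \<inter> B = {}" "p permutes A \<union> B" "p ` A = A"
  shows "p ` B = B"
proof -
  have "p ` B = p ` (A \<union> B) - p ` A"
    using assms(1) permutes_inj[OF assms(2)]
    by (simp add: image_set_diff[symmetric] Un_Diff Diff_triv inf_commute)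
  then show ?thesis
    using assms permutes_image[OF assms(2)] by auto
qed

lemma bij_betw_compose_disjoint_permutes:
  assumes disj: "A \<inter> B = {}"
  shows "bij_betw (\<lambda>(a, b). a \<circ> b) ({a. a permutes A} \<times> {b. b permutes B \<and> \<Phi> b})
           {p. p permutes A \<union> B \<and> p ` A = A \<and> \<Phi> (restrict_id p B)}"
proof (rule bij_betw_byWitness[where f' = "\<lambda>p. (restrict_id p A, restrict_id p B)"])
  show "\<forall>x\<in>{a. a permutes A} \<times> {b. b permutes B \<and> \<Phi> b}.
          (restrict_id (case x of (a, b) \<Rightarrow> a \<circ> b) A, restrict_id (case x of (a, b) \<Rightarrow> a \<circ> b) B) = x"
    using restrict_id_compose_disjoint_permutes[OF disj] by auto
  have "a \<circ> b \<in> {p. p permutes A \<union> B \<and> p ` A = A \<and> \<Phi> (restrict_id p B)}"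
    if a: "a permutes A" and b: "b permutes B" and "\<Phi> b" for a b
  proof -
    have "\<forall>x\<in>A. b x = x"
      using b disj by (blast intro: permutes_not_in)
    then have "b ` A = A"
      by (metis image_cong image_ident)
    then have "(a \<circ> b) ` A = A"
      using permutes_image[OF a] by (simp only: image_comp[symmetric])
    moreover have "a \<circ> b permutes A \<union> B"
      using permutes_subset[OF a, of "A \<union> B"] permutes_subset[OF b, of "A \<union> B"]
      by (simp add: permutes_compose)
    ultimately show ?thesis
      using \<open>\<Phi> b\<close> restrict_id_compose_disjoint_permutes[OF disj a b] by (simp only: mem_Collect_eq)
  qed
  then show "(\<lambda>(a, b). a \<circ> b) ` ({a. a permutes A} \<times> {b. b permutes B \<and> \<Phi> b})
          \<subseteq> {p. p permutes A \<union> B \<and> p ` A = A \<and> \<Phi> (restrict_id p B)}"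
    by (simp add: image_subset_iff)
  show "\<forall>p\<in>{p. p permutes A \<union> B \<and> p ` A = A \<and> \<Phi> (restrict_id p B)}.
          (case (restrict_id p A, restrict_id p B) of (a, b) \<Rightarrow> a \<circ> b) = p"
  proof clarsimp
    fix p assume p: "p permutes A \<union> B" "p ` A = A"
    show "restrict_id p A \<circ> restrict_id p B = p"
      using p permutes_Un_image_eq[OF disj p] disj permutes_not_in[OF p(1)]
      by (fastforce simp: fun_eq_iff restrict_id_def)
  qed
  show "(\<lambda>p. (restrict_id p A, restrict_id p B)) ` {p. p permutes A \<union> B \<and> p ` A = A \<and> \<Phi> (restrict_id p B)}
          \<subseteq> {a. a permutes A} \<times> {b. b permutes B \<and> \<Phi> b}"
  proof clarsimp
    fix p assume p: "p permutes A \<union> B" "p ` A = A" "\<Phi> (restrict_id p B)"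
    have "bij_betw p A A" "bij_betw p B B"
      using p permutes_Un_image_eq[OF disj p(1,2)] permutes_inj[OF p(1)]
      by (auto intro: bij_betw_imageI inj_on_subset)
    then show "restrict_id p A permutes A \<and> restrict_id p B permutes B"
      by (simp add: permutes_restrict_id)
  qed
qed

lemma card_permutes_stabilising_blocks:
  assumes "finite \<X>" "\<forall>X\<in>\<X>. finite X" "disjoint \<X>"
  shows "card {p. p permutes \<Union>\<X> \<and> (\<forall>X\<in>\<X>. p ` X = X)} = (\<Prod>X\<in>\<X>. fact (card X))"
  using assms
proof (induction \<X> rule: finite_induct)
  case empty
  then show ?case by simp
next
  case (insert A \<X>)
  let ?\<Phi> = "\<lambda>q. \<forall>X\<in>\<X>. q ` X = X"
  have disj: "A \<inter> \<Union>\<X> = {}"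
    using insert.hyps(2) insert.prems(2) by (auto simp: pairwise_def disjnt_def)
  have "{p. p permutes \<Union>(insert A \<X>) \<and> (\<forall>X\<in>insert A \<X>. p ` X = X)}
      = {p. p permutes A \<union> \<Union>\<X> \<and> p ` A = A \<and> ?\<Phi> (restrict_id p (\<Union>\<X>))}"
  proof -
    have "restrict_id p (\<Union>\<X>) ` X = p ` X" if "X \<in> \<X>" for p X
      using that by (auto intro!: image_cong simp: restrict_id_def)
    then show ?thesis by auto
  qed
  then have "card {p. p permutes \<Union>(insert A \<X>) \<and> (\<forall>X\<in>insert A \<X>. p ` X = X)}
      = card ({a. a permutes A} \<times> {q. q permutes \<Union>\<X> \<and> ?\<Phi> q})"
    using bij_betw_same_card[OF bij_betw_compose_disjoint_permutes[OF disj]] by simp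
  also have "\<dots> = fact (card A) * (\<Prod>X\<in>\<X>. fact (card X))"
    using insert by (simp add: card_cartesian_product card_permutations pairwise_insert)
  also have "\<dots> = (\<Prod>X\<in>insert A \<X>. fact (card X))"
    using insert.hyps by simp
  finally show ?case .
qed

section \<open>Rays and faces of cones\<close>

lemma face_of_midpoint:
  assumes "F face_of S" "a \<in> S" "b \<in> S" "midpoint a b \<in> F"
  shows "a \<in> F \<and> b \<in> F"
  using assms face_ofD[of F S "midpoint a b" a b] by (cases "a = b") auto

lemma open_segment_nonneg_component_eq_0:
  fixes a b x :: "real^'n"
  assumes "\<forall>i. 0 \<le> a$i" "\<forall>i. 0 \<le> b$i" "x \<in> open_segment a b" "x$k = 0"
  shows "a$k = 0 \<and> b$k = 0"
proof -
  obtain u where u: "0 < u" "u < 1" "x = (1 - u) *\<^sub>R a + u *\<^sub>R b"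
    using assms(3) by (auto simp: in_segment)
  have "(1 - u) * a$k + u * b$k = 0" "0 \<le> (1 - u) * a$k" "0 \<le> u * b$k"
    using u assms(1,2,4) by auto
  then show ?thesis
    using u by (simp add: add_nonneg_eq_0_iff)
qed

lemma ray_eq_cone_hull: "ray v = cone hull {v}"
  by (auto simp: ray_def cone_hull_expl)

lemma in_ray_self: "v \<in> ray v"
  by (simp add: ray_eq_cone_hull hull_inc)

lemma cone_ray: "cone (ray v)"
  by (simp add: ray_eq_cone_hull cone_cone_hull)

lemma ray_scaleR:
  assumes "0 < s"
  shows "ray (s *\<^sub>R v) = ray v"
proof
  show "ray (s *\<^sub>R v) \<subseteq> ray v"
    unfolding ray_def
  proof clarify
    fix t :: real assume "0 \<le> t"
    then show "\<exists>r. t *\<^sub>R s *\<^sub>R v = r *\<^sub>R v \<and> 0 \<le> r"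
      using assms by (intro exI[of _ "t * s"]) auto
  qed
  show "ray v \<subseteq> ray (s *\<^sub>R v)"
    unfolding ray_def
  proof clarify
    fix t :: real assume "0 \<le> t"
    then show "\<exists>r. t *\<^sub>R v = r *\<^sub>R s *\<^sub>R v \<and> 0 \<le> r"
      using assms by (intro exI[of _ "t / s"]) auto
  qed
qed

lemma ray_face_of_cone_summand:
  assumes "cone K" "ray v face_of K" "a \<in> K" "b \<in> K" "a + b = v"
  shows "a \<in> ray v"
proof -
  have "midpoint (2 *\<^sub>R a) (2 *\<^sub>R b) = v"
    using assms(5) by (simp add: midpoint_def algebra_simps)
  moreover have "2 *\<^sub>R a \<in> K" "2 *\<^sub>R b \<in> K"
    using assms(1,3,4) by (simp_all add: cone_def)
  ultimately have "2 *\<^sub>R a \<in> ray v"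
    using face_of_midpoint[OF assms(2)] in_ray_self by simp
  moreover have "(0::real) \<le> 1/2"
    by simp
  ultimately have "(1/2) *\<^sub>R (2 *\<^sub>R a) \<in> ray v"
    using cone_ray unfolding cone_def by blast
  then show ?thesis
    by simp
qed

section \<open>Coordinates of BZ labellings\<close>

lemma exhaust_9:
  fixes x :: 9
  shows "x = 1 \<or> x = 2 \<or> x = 3 \<or> x = 4 \<or> x = 5 \<or> x = 6 \<or> x = 7 \<or> x = 8 \<or> x = 9"
proof (induct x)
  case (of_int z)
  then have "z = 0 \<or> z = 1 \<or> z = 2 \<or> z = 3 \<or> z = 4 \<or> z = 5 \<or> z = 6 \<or> z = 7 \<or> z = 8"
    by fastforce
  then show ?case by auto
qed

lemma forall_9:
  "(\<forall>i::9. \<phi> i) \<longleftrightarrow> \<phi> 1 \<and> \<phi> 2 \<and> \<phi> 3 \<and> \<phi> 4 \<and> \<phi> 5 \<and> \<phi> 6 \<and> \<phi> 7 \<and> \<phi> 8 \<and> \<phi> 9"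
  by (metis exhaust_9)

lemma vec_eq_iff_9:
  "(x::'a^9) = y \<longleftrightarrow> x$1 = y$1 \<and> x$2 = y$2 \<and> x$3 = y$3 \<and> x$4 = y$4 \<and> x$5 = y$5
     \<and> x$6 = y$6 \<and> x$7 = y$7 \<and> x$8 = y$8 \<and> x$9 = y$9"
  by (simp add: vec_eq_iff forall_9)

lemma less_8_iff: "(i::nat) < 8 \<longleftrightarrow> i = 0 \<or> i = 1 \<or> i = 2 \<or> i = 3 \<or> i = 4 \<or> i = 5 \<or> i = 6 \<or> i = 7"
  by auto

lemma all_less_8: "(\<forall>i<8::nat. \<phi> i) \<longleftrightarrow> \<phi> 0 \<and> \<phi> 1 \<and> \<phi> 2 \<and> \<phi> 3 \<and> \<phi> 4 \<and> \<phi> 5 \<and> \<phi> 6 \<and> \<phi> 7"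
  unfolding less_8_iff by blast

lemma sum_lessThan_8:
  fixes g :: "nat \<Rightarrow> 'a::comm_monoid_add"
  shows "(\<Sum>i<8. g i) = g 0 + g 1 + g 2 + g 3 + g 4 + g 5 + g 6 + g 7"
  by (simp add: eval_nat_numeral lessThan_Suc add_ac)

lemma fund_simps:
  "fund 0 = C1" "fund 1 = C2" "fund (Suc 0) = C2" "fund 2 = C3" "fund 3 = D1"
  "fund 4 = D3" "fund 5 = D5" "fund 6 = P" "fund 7 = Q"
  by (simp_all add: fund_def eval_nat_numeral)

lemma rel_coeff_simps:
  "rel_coeff 0 = 0" "rel_coeff 1 = 0" "rel_coeff (Suc 0) = 0" "rel_coeff 2 = 0" "rel_coeff 3 = 1"
  "rel_coeff 4 = 1" "rel_coeff 5 = 1" "rel_coeff 6 = -1" "rel_coeff 7 = -1"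
  by (simp_all add: rel_coeff_def eval_nat_numeral)

lemma axis_one_nth: "axis k (1::real) $ j = (if j = k then 1 else 0)"
  by (simp add: axis_def)

lemmas fund_vector_defs = C1_def C2_def C3_def D1_def D3_def D5_def P_def Q_def axis_one_nth

lemma fund_combination_nth:
  fixes c :: "nat \<Rightarrow> real"
  defines "x \<equiv> \<Sum>i<8. c i *\<^sub>R fund i"
  shows "x$1 = c 0" "x$2 = c 1" "x$3 = c 2" "x$4 = c 3 + c 6" "x$5 = c 5 + c 7"
    "x$6 = c 4 + c 6" "x$7 = c 3 + c 7" "x$8 = c 5 + c 6" "x$9 = c 4 + c 7"
  unfolding x_def sum_lessThan_8 by (simp_all add: fund_simps fund_vector_defs)

lemma fund_combination_in_V_BZ: "(\<Sum>i<8. c i *\<^sub>R fund i) \<in> V_BZ"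
  unfolding V_BZ_def mem_Collect_eq fund_combination_nth by simp

lemma fund_combination_in_C_BZ:
  assumes "\<forall>i<8. 0 \<le> c i"
  shows "(\<Sum>i<8. c i *\<^sub>R fund i) \<in> C_BZ"
  using assms fund_combination_in_V_BZ
  unfolding C_BZ_def mem_Collect_eq forall_9 fund_combination_nth all_less_8 by auto

lemma fund_combination_eq_0_iff:
  "(\<Sum>i<8. c i *\<^sub>R fund i) = 0 \<longleftrightarrow> (\<exists>t. \<forall>i<8. c i = t * rel_coeff i)"
proof
  assume "(\<Sum>i<8. c i *\<^sub>R fund i) = 0"
  then have "c 0 = 0" "c 1 = 0" "c 2 = 0" "c 3 + c 6 = 0" "c 5 + c 7 = 0" "c 4 + c 6 = 0"
     "c 3 + c 7 = 0" "c 5 + c 6 = 0" "c 4 + c 7 = 0"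
    unfolding vec_eq_iff_9 fund_combination_nth by auto
  then show "\<exists>t. \<forall>i<8. c i = t * rel_coeff i"
    by (intro exI[of _ "c 3"]) (simp add: all_less_8 rel_coeff_simps)
next
  assume "\<exists>t. \<forall>i<8. c i = t * rel_coeff i"
  then show "(\<Sum>i<8. c i *\<^sub>R fund i) = 0"
    unfolding vec_eq_iff_9 fund_combination_nth all_less_8 by (auto simp: rel_coeff_simps)
qed

lemma fund_combination_split_off:
  assumes "j < 8"
  shows "(\<Sum>i<8. c i *\<^sub>R fund i) = s *\<^sub>R fund j + (\<Sum>i<8. (c(j := c j - s)) i *\<^sub>R fund i)"
proof -
  have "(\<Sum>i<8. (c(j := c j - s)) i *\<^sub>R fund i) = (\<Sum>i<8. c i *\<^sub>R fund i - (if i = j then s *\<^sub>R fund j else 0))"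
    by (intro sum.cong) (auto simp: scaleR_diff_left)
  also have "\<dots> = (\<Sum>i<8. c i *\<^sub>R fund i) - s *\<^sub>R fund j"
    using assms by (simp add: sum_subtractf)
  finally show ?thesis
    by simp
qed

lemma sum_rel_coeff: "(\<Sum>i<8. rel_coeff i) = 1"
  by (simp add: sum_lessThan_8 rel_coeff_simps)

text \<open>The coefficients are not unique because of the relation; this choice makes one of
  the coefficients of P and Q vanish.\<close>

definition bz_coeff :: "real^9 \<Rightarrow> nat \<Rightarrow> real" where
  "bz_coeff x i = [x$1, x$2, x$3, min (x$4) (x$7), min (x$6) (x$9), min (x$5) (x$8),
                   max (x$4 - x$7) 0, max (x$7 - x$4) 0] ! i"

lemma bz_coeff_simps:
  "bz_coeff x 0 = x$1" "bz_coeff x 1 = x$2" "bz_coeff x (Suc 0) = x$2" "bz_coeff x 2 = x$3"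
  "bz_coeff x 3 = min (x$4) (x$7)" "bz_coeff x 4 = min (x$6) (x$9)" "bz_coeff x 5 = min (x$5) (x$8)"
  "bz_coeff x 6 = max (x$4 - x$7) 0" "bz_coeff x 7 = max (x$7 - x$4) 0"
  by (simp_all add: bz_coeff_def eval_nat_numeral)

lemma V_BZ_fund_decomposition: "x \<in> V_BZ \<Longrightarrow> (\<Sum>i<8. bz_coeff x i *\<^sub>R fund i) = x"
  unfolding vec_eq_iff_9 fund_combination_nth bz_coeff_simps V_BZ_def by auto

lemma bz_coeff_nonneg: "x \<in> C_BZ \<Longrightarrow> i < 8 \<Longrightarrow> 0 \<le> bz_coeff x i"
  unfolding C_BZ_def less_8_iff by (auto simp: bz_coeff_simps)

lemma bz_coeff_Ints: "x \<in> Lambda_BZ \<Longrightarrow> i < 8 \<Longrightarrow> bz_coeff x i \<in> \<int>"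
  unfolding Lambda_BZ_def less_8_iff by (auto simp: bz_coeff_simps min_def max_def)

lemma Lambda_BZ_floor_decomposition:
  assumes "x \<in> Lambda_BZ"
  shows "(\<Sum>i<8. of_int \<lfloor>bz_coeff x i\<rfloor> *\<^sub>R fund i) = x"
proof -
  have "(\<Sum>i<8. of_int \<lfloor>bz_coeff x i\<rfloor> *\<^sub>R fund i) = (\<Sum>i<8. bz_coeff x i *\<^sub>R fund i)"
    using bz_coeff_Ints[OF assms] by (intro sum.cong) (auto elim!: Ints_cases)
  then show ?thesis
    using assms V_BZ_fund_decomposition by (simp add: Lambda_BZ_def)
qed

lemma Lambda_BZ_iff_int_combination:
  "x \<in> Lambda_BZ \<longleftrightarrow> (\<exists>c :: nat \<Rightarrow> int. x = (\<Sum>i<8. of_int (c i) *\<^sub>R fund i))"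
proof
  assume "x \<in> Lambda_BZ"
  then show "\<exists>c :: nat \<Rightarrow> int. x = (\<Sum>i<8. of_int (c i) *\<^sub>R fund i)"
    by (metis Lambda_BZ_floor_decomposition)
next
  assume "\<exists>c :: nat \<Rightarrow> int. x = (\<Sum>i<8. of_int (c i) *\<^sub>R fund i)"
  then obtain c :: "nat \<Rightarrow> int" where x: "x = (\<Sum>i<8. of_int (c i) *\<^sub>R fund i)" ..
  show "x \<in> Lambda_BZ"
    unfolding Lambda_BZ_def mem_Collect_eq forall_9 x fund_combination_nth
    by (simp add: fund_combination_in_V_BZ)
qed

lemma BZ_triangles_iff_nonneg_int_combination:
  "x \<in> BZ_triangles \<longleftrightarrow>
     (\<exists>c :: nat \<Rightarrow> int. (\<forall>i<8. 0 \<le> c i) \<and> x = (\<Sum>i<8. of_int (c i) *\<^sub>R fund i))"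
proof
  assume x: "x \<in> BZ_triangles"
  then have "x \<in> C_BZ"
    by (simp add: BZ_triangles_def Lambda_BZ_def C_BZ_def)
  then show "\<exists>c :: nat \<Rightarrow> int. (\<forall>i<8. 0 \<le> c i) \<and> x = (\<Sum>i<8. of_int (c i) *\<^sub>R fund i)"
    using x Lambda_BZ_floor_decomposition bz_coeff_nonneg
    by (intro exI[of _ "\<lambda>i. \<lfloor>bz_coeff x i\<rfloor>"]) (simp add: BZ_triangles_def)
next
  assume "\<exists>c :: nat \<Rightarrow> int. (\<forall>i<8. 0 \<le> c i) \<and> x = (\<Sum>i<8. of_int (c i) *\<^sub>R fund i)"
  then obtain c :: "nat \<Rightarrow> int"
    where c: "\<forall>i<8. 0 \<le> c i" and x: "x = (\<Sum>i<8. of_int (c i) *\<^sub>R fund i)" by blast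
  have "\<forall>i. 0 \<le> x$i"
    using c unfolding forall_9 all_less_8 x fund_combination_nth by simp
  then show "x \<in> BZ_triangles"
    using x by (auto simp: BZ_triangles_def Lambda_BZ_iff_int_combination)
qed

section \<open>The extreme rays of the BZ cone\<close>

lemma cone_C_BZ: "cone C_BZ"
  unfolding cone_def C_BZ_def V_BZ_def by (auto simp: right_diff_distrib[symmetric])

lemma fund_in_BZ_triangles: "i < 8 \<Longrightarrow> fund i \<in> BZ_triangles"
  unfolding less_8_iff BZ_triangles_def Lambda_BZ_def V_BZ_def mem_Collect_eq forall_9
  by (elim disjE) (simp_all add: fund_simps fund_vector_defs)

lemma fund_in_Lambda_BZ: "i < 8 \<Longrightarrow> fund i \<in> Lambda_BZ"
  using fund_in_BZ_triangles by (simp add: BZ_triangles_def)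

lemma fund_in_C_BZ: "i < 8 \<Longrightarrow> fund i \<in> C_BZ"
  using fund_in_BZ_triangles by (simp add: BZ_triangles_def Lambda_BZ_def C_BZ_def)

lemma fund_eq_scaleR_fund_imp_eq: "i < 8 \<Longrightarrow> j < 8 \<Longrightarrow> fund i = t *\<^sub>R fund j \<Longrightarrow> i = j"
  unfolding less_8_iff vec_eq_iff_9 by (elim disjE) (simp_all add: fund_simps fund_vector_defs)

lemma inj_on_fund: "inj_on fund {..<8}"
  using fund_eq_scaleR_fund_imp_eq[where t = 1] by (auto intro: inj_onI)

definition pivot :: "nat \<Rightarrow> 9" where
  "pivot i = [1, 2, 3, 4, 6, 5, 4, 5] ! i"

lemma pivot_simps:
  "pivot 0 = 1" "pivot 1 = 2" "pivot (Suc 0) = 2" "pivot 2 = 3" "pivot 3 = 4" "pivot 4 = 6"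
  "pivot 5 = 5" "pivot 6 = 4" "pivot 7 = 5"
  by (simp_all add: pivot_def eval_nat_numeral)

lemma fund_pivot: "i < 8 \<Longrightarrow> fund i $ pivot i = 1"
  unfolding less_8_iff by (elim disjE) (simp_all add: pivot_simps fund_simps fund_vector_defs)

lemma fund_nonzero: "i < 8 \<Longrightarrow> fund i \<noteq> 0"
  using fund_pivot by force

lemma C_BZ_support_subset_imp_multiple:
  assumes "a \<in> C_BZ" "i < 8" "\<forall>k. fund i $ k = 0 \<longrightarrow> a $ k = 0"
  shows "a = a $ pivot i *\<^sub>R fund i"
  using assms unfolding less_8_iff C_BZ_def V_BZ_def mem_Collect_eq forall_9 vec_eq_iff_9
  by (elim disjE) (simp_all add: pivot_simps fund_simps fund_vector_defs)

lemma ray_fund_face_of_C_BZ: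
  assumes i: "i < 8"
  shows "ray (fund i) face_of C_BZ"
  unfolding face_of_def
proof (intro conjI ballI impI)
  show "convex (ray (fund i))"
    by (simp add: ray_eq_cone_hull convex_cone_hull)
  show "ray (fund i) \<subseteq> C_BZ"
    using cone_C_BZ fund_in_C_BZ[OF i] by (simp add: ray_eq_cone_hull hull_minimal)
  fix a b x
  assume ab: "a \<in> C_BZ" "b \<in> C_BZ" and x: "x \<in> ray (fund i)" "x \<in> open_segment a b"
  obtain t where t: "x = t *\<^sub>R fund i"
    using x(1) by (auto simp: ray_def)
  have nonneg: "\<forall>k. 0 \<le> a $ k" "\<forall>k. 0 \<le> b $ k"
    using ab by (simp_all add: C_BZ_def)
  have "a $ k = 0 \<and> b $ k = 0" if "fund i $ k = 0" for k
    using open_segment_nonneg_component_eq_0[OF nonneg x(2)] that t by simp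
  then have "a = a $ pivot i *\<^sub>R fund i" "b = b $ pivot i *\<^sub>R fund i"
    using C_BZ_support_subset_imp_multiple[OF ab(1) i] C_BZ_support_subset_imp_multiple[OF ab(2) i]
    by blast+
  moreover have "0 \<le> a $ pivot i" "0 \<le> b $ pivot i"
    using nonneg by simp_all
  ultimately show "a \<in> ray (fund i)" "b \<in> ray (fund i)"
    unfolding ray_def by blast+
qed

lemma extreme_ray_of_C_BZ_imp_fund:
  assumes "extreme_ray_of R C_BZ"
  shows "\<exists>j<8. R = ray (fund j)"
proof -
  obtain v where v: "v \<noteq> 0" "R = ray v" and face: "ray v face_of C_BZ"
    using assms by (auto simp: extreme_ray_of_def)
  have "v \<in> C_BZ"
    using face_of_imp_subset[OF face] in_ray_self by blast
  define c where "c = bz_coeff v"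
  have v_eq: "v = (\<Sum>i<8. c i *\<^sub>R fund i)" and c_nonneg: "\<forall>i<8. 0 \<le> c i"
    using \<open>v \<in> C_BZ\<close> V_BZ_fund_decomposition bz_coeff_nonneg by (auto simp: c_def C_BZ_def)
  obtain j where "j \<in> {..<8}" "c j *\<^sub>R fund j \<noteq> 0"
    using v(1) unfolding v_eq by (rule sum.not_neutral_contains_not_neutral)
  then have j: "j < 8" "c j \<noteq> 0"
    by auto
  define w where "w = (\<Sum>i<8. (c(j := 0)) i *\<^sub>R fund i)"
  have "w \<in> C_BZ"
    unfolding w_def using c_nonneg by (intro fund_combination_in_C_BZ) simp
  moreover have "c j *\<^sub>R fund j \<in> C_BZ"
    using cone_C_BZ fund_in_C_BZ[OF j(1)] c_nonneg j(1) by (simp add: cone_def)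
  moreover have "c j *\<^sub>R fund j + w = v"
    using fund_combination_split_off[OF j(1), of c "c j"] by (simp add: v_eq w_def)
  ultimately have "c j *\<^sub>R fund j \<in> ray v"
    by (intro ray_face_of_cone_summand[OF cone_C_BZ face])
  then obtain t where t: "c j *\<^sub>R fund j = t *\<^sub>R v" "0 \<le> t"
    by (auto simp: ray_def)
  have "0 < c j" "0 < t"
    using c_nonneg j t fund_nonzero[OF j(1)] by (auto simp: order.order_iff_strict)
  have "v = (1 / t) *\<^sub>R (t *\<^sub>R v)"
    using \<open>0 < t\<close> by simp
  also have "\<dots> = (c j / t) *\<^sub>R fund j"
    by (simp add: t(1)[symmetric])
  finally have "ray v = ray (fund j)"
    using \<open>0 < c j\<close> \<open>0 < t\<close> by (simp add: ray_scaleR)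
  then show ?thesis
    using v(2) j(1) by blast
qed

lemma extreme_rays_C_BZ: "{R. extreme_ray_of R C_BZ} = ray ` fund ` {..<8}"
proof
  show "{R. extreme_ray_of R C_BZ} \<subseteq> ray ` fund ` {..<8}"
    using extreme_ray_of_C_BZ_imp_fund by blast
  show "ray ` fund ` {..<8} \<subseteq> {R. extreme_ray_of R C_BZ}"
    unfolding extreme_ray_of_def using fund_nonzero ray_fund_face_of_C_BZ by blast
qed

lemma card_fund_rays: "card (ray ` fund ` {..<8}) = 8"
proof -
  have "inj_on (ray \<circ> fund) {..<8}"
  proof (rule inj_onI)
    fix i j assume ij: "i \<in> {..<8}" "j \<in> {..<8}" "(ray \<circ> fund) i = (ray \<circ> fund) j"
    then have "fund i \<in> ray (fund j)"
      using in_ray_self[of "fund i"] by simp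
    then show "i = j"
      using fund_eq_scaleR_fund_imp_eq ij by (auto simp: ray_def)
  qed
  from card_image[OF this] show ?thesis
    by (simp add: image_comp)
qed

section \<open>Automorphisms permute the fundamental triangles\<close>

lemma Lambda_BZ_subset_V_BZ: "Lambda_BZ \<subseteq> V_BZ"
  by (auto simp: Lambda_BZ_def)

lemma BZ_triangles_subset_Lambda_BZ: "BZ_triangles \<subseteq> Lambda_BZ"
  by (auto simp: BZ_triangles_def)

lemma Lambda_BZ_add: "x \<in> Lambda_BZ \<Longrightarrow> y \<in> Lambda_BZ \<Longrightarrow> x + y \<in> Lambda_BZ"
  unfolding Lambda_BZ_def V_BZ_def by auto

lemma Lambda_BZ_scaleR_Ints: "k \<in> \<int> \<Longrightarrow> x \<in> Lambda_BZ \<Longrightarrow> k *\<^sub>R x \<in> Lambda_BZ"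
  unfolding Lambda_BZ_def V_BZ_def by (auto simp: right_diff_distrib[symmetric])

lemma zero_in_Lambda_BZ: "0 \<in> Lambda_BZ"
  unfolding Lambda_BZ_def V_BZ_def by auto

lemma Lambda_BZ_Ints_combination:
  assumes "finite A" "\<forall>i\<in>A. c i \<in> \<int> \<and> v i \<in> Lambda_BZ"
  shows "(\<Sum>i\<in>A. c i *\<^sub>R v i) \<in> Lambda_BZ"
  using assms by (induction A rule: finite_induct)
    (auto intro: zero_in_Lambda_BZ Lambda_BZ_add Lambda_BZ_scaleR_Ints)

lemma G_BZ_add: "f \<in> G_BZ \<Longrightarrow> x \<in> Lambda_BZ \<Longrightarrow> y \<in> Lambda_BZ \<Longrightarrow> f (x + y) = f x + f y"
  by (simp add: G_BZ_def)

lemma G_BZ_inj_on: "f \<in> G_BZ \<Longrightarrow> inj_on f Lambda_BZ"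
  by (simp add: G_BZ_def bij_betw_def)

lemma G_BZ_zero: "f \<in> G_BZ \<Longrightarrow> f 0 = 0"
  using G_BZ_add[of f 0 0] zero_in_Lambda_BZ by simp

lemma G_BZ_scaleR_Ints:
  assumes f: "f \<in> G_BZ" and k: "k \<in> \<int>" and x: "x \<in> Lambda_BZ"
  shows "f (k *\<^sub>R x) = k *\<^sub>R f x"
proof -
  obtain n where n: "k = of_int n"
    using k by (auto elim: Ints_cases)
  have step: "f (of_int (n + 1) *\<^sub>R x) = f (of_int n *\<^sub>R x) + f x" for n
    using G_BZ_add[OF f Lambda_BZ_scaleR_Ints[OF Ints_of_int x] x] by (simp add: algebra_simps)
  have "f (of_int n *\<^sub>R x) = of_int n *\<^sub>R f x"
  proof (induction n rule: int_induct[where k = 0])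
    case base
    then show ?case using G_BZ_zero[OF f] by simp
  next
    case (step1 n)
    then show ?case using step[of n] by (simp add: algebra_simps)
  next
    case (step2 n)
    then show ?case using step[of "n - 1"] by (simp add: algebra_simps)
  qed
  then show ?thesis
    using n by simp
qed

lemma G_BZ_Ints_combination:
  assumes f: "f \<in> G_BZ" and "finite A" "\<forall>i\<in>A. c i \<in> \<int> \<and> v i \<in> Lambda_BZ"
  shows "f (\<Sum>i\<in>A. c i *\<^sub>R v i) = (\<Sum>i\<in>A. c i *\<^sub>R f (v i))"
  using assms(2,3)
proof (induction A rule: finite_induct)
  case empty
  then show ?case using G_BZ_zero[OF f] by simp
next
  case (insert a A)
  then have "f (\<Sum>i\<in>insert a A. c i *\<^sub>R v i) = f (c a *\<^sub>R v a) + f (\<Sum>i\<in>A. c i *\<^sub>R v i)"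
    by (simp add: G_BZ_add[OF f] Lambda_BZ_scaleR_Ints Lambda_BZ_Ints_combination)
  then show ?case
    using insert by (simp add: G_BZ_scaleR_Ints[OF f])
qed

lemma G_BZ_eqI:
  assumes f: "f \<in> G_BZ" and g: "g \<in> G_BZ" and fund_eq: "\<forall>i<8. f (fund i) = g (fund i)"
  shows "f = g"
proof (rule extensionalityI)
  show "f \<in> extensional Lambda_BZ" "g \<in> extensional Lambda_BZ"
    using f g by (simp_all add: G_BZ_def)
  fix x assume "x \<in> Lambda_BZ"
  then obtain c :: "nat \<Rightarrow> int" where x: "x = (\<Sum>i<8. of_int (c i) *\<^sub>R fund i)"
    by (auto simp: Lambda_BZ_iff_int_combination)
  have "f x = (\<Sum>i<8. of_int (c i) *\<^sub>R f (fund i))"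
    unfolding x using fund_in_Lambda_BZ by (intro G_BZ_Ints_combination[OF f]) auto
  also have "\<dots> = (\<Sum>i<8. of_int (c i) *\<^sub>R g (fund i))"
    using fund_eq by simp
  also have "\<dots> = g x"
    unfolding x using fund_in_Lambda_BZ by (intro G_BZ_Ints_combination[OF g, symmetric]) auto
  finally show "f x = g x" .
qed

definition indecomposable_BZ :: "real^9 \<Rightarrow> bool" where
  "indecomposable_BZ x \<longleftrightarrow> x \<in> BZ_triangles \<and> x \<noteq> 0 \<and>
     (\<forall>a\<in>BZ_triangles. \<forall>b\<in>BZ_triangles. x = a + b \<longrightarrow> a = 0 \<or> b = 0)"

lemma indecomposable_BZ_fund:
  assumes i: "i < 8"
  shows "indecomposable_BZ (fund i)"
  unfolding indecomposable_BZ_def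
proof (intro conjI fund_in_BZ_triangles[OF i] fund_nonzero[OF i] ballI impI)
  fix a b assume a: "a \<in> BZ_triangles" and b: "b \<in> BZ_triangles" and ab: "fund i = a + b"
  have C: "a \<in> C_BZ" "b \<in> C_BZ"
    using a b by (simp_all add: BZ_triangles_def Lambda_BZ_def C_BZ_def)
  have "a $ k = 0 \<and> b $ k = 0" if "fund i $ k = 0" for k
    using C ab that by (auto simp: C_BZ_def add_nonneg_eq_0_iff)
  then have a_eq: "a = a $ pivot i *\<^sub>R fund i" and b_eq: "b = b $ pivot i *\<^sub>R fund i"
    using C_BZ_support_subset_imp_multiple[OF C(1) i] C_BZ_support_subset_imp_multiple[OF C(2) i]
    by blast+
  have "a $ pivot i + b $ pivot i = 1"
    using ab fund_pivot[OF i] by (metis vector_add_component)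
  moreover have "a $ pivot i \<in> \<int>" "b $ pivot i \<in> \<int>" "0 \<le> a $ pivot i" "0 \<le> b $ pivot i"
    using a b by (auto simp: BZ_triangles_def Lambda_BZ_def)
  ultimately have "a $ pivot i = 0 \<or> b $ pivot i = 0"
    by (auto elim!: Ints_cases)
  then show "a = 0 \<or> b = 0"
    using a_eq b_eq by (metis scale_zero_left)
qed

lemma indecomposable_BZ_imp_fund:
  assumes x: "indecomposable_BZ x"
  shows "\<exists>j<8. x = fund j"
proof -
  obtain c :: "nat \<Rightarrow> int" where c_nonneg: "\<forall>i<8. 0 \<le> c i"
    and x_eq: "x = (\<Sum>i<8. of_int (c i) *\<^sub>R fund i)"
    using x by (auto simp: indecomposable_BZ_def BZ_triangles_iff_nonneg_int_combination)
  have "x \<noteq> 0"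
    using x by (simp add: indecomposable_BZ_def)
  then obtain j where "j \<in> {..<8}" "of_int (c j) *\<^sub>R fund j \<noteq> (0::real^9)"
    unfolding x_eq by (rule sum.not_neutral_contains_not_neutral)
  then have j: "j < 8" "c j \<noteq> 0"
    by auto
  define c' where "c' = c(j := c j - 1)"
  define rest where "rest = (\<Sum>i<8. of_int (c' i) *\<^sub>R fund i)"
  have "rest \<in> BZ_triangles"
    unfolding rest_def BZ_triangles_iff_nonneg_int_combination
    using c_nonneg j by (intro exI[of _ c']) (auto simp: c'_def)
  moreover have "x = fund j + rest"
  proof -
    have c'_eq: "(\<lambda>i. real_of_int (c i))(j := real_of_int (c j) - 1) = (\<lambda>i. real_of_int (c' i))"
      by (auto simp: c'_def)
    show ?thesis
      using fund_combination_split_off[OF j(1), of "\<lambda>i. real_of_int (c i)" 1]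
      unfolding x_eq rest_def c'_eq by simp
  qed
  moreover have "\<forall>a\<in>BZ_triangles. \<forall>b\<in>BZ_triangles. x = a + b \<longrightarrow> a = 0 \<or> b = 0"
    using x by (simp add: indecomposable_BZ_def)
  ultimately have "rest = 0"
    using fund_in_BZ_triangles[OF j(1)] fund_nonzero[OF j(1)] by blast
  then show ?thesis
    using \<open>x = fund j + rest\<close> j(1) by auto
qed

lemma indecomposable_BZ_iff: "indecomposable_BZ x \<longleftrightarrow> (\<exists>j<8. x = fund j)"
  using indecomposable_BZ_imp_fund indecomposable_BZ_fund by blast

lemma G_BZ_preserves_indecomposable:
  assumes f: "f \<in> G_BZ" and x: "indecomposable_BZ x"
  shows "indecomposable_BZ (f x)"
proof -
  have T: "f ` BZ_triangles = BZ_triangles" and inj: "inj_on f Lambda_BZ"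
    using f G_BZ_inj_on by (simp_all add: G_BZ_def)
  have x_T: "x \<in> BZ_triangles" and "x \<noteq> 0"
    using x by (simp_all add: indecomposable_BZ_def)
  note T_Lambda = subsetD[OF BZ_triangles_subset_Lambda_BZ]
  have "f x \<noteq> 0"
    using \<open>x \<noteq> 0\<close> G_BZ_zero[OF f] inj_onD[OF inj, of x 0] T_Lambda[OF x_T] zero_in_Lambda_BZ by auto
  moreover have "a = 0 \<or> b = 0"
    if ab: "a \<in> BZ_triangles" "b \<in> BZ_triangles" "f x = a + b" for a b
  proof -
    obtain a' b' where a': "a' \<in> BZ_triangles" "a = f a'" and b': "b' \<in> BZ_triangles" "b = f b'"
      using ab(1,2) T by blast
    then have "f (a' + b') = f x"
      using ab(3) G_BZ_add[OF f] T_Lambda by simp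
    then have "a' + b' = x"
      using inj_onD[OF inj _ Lambda_BZ_add[OF T_Lambda[OF a'(1)] T_Lambda[OF b'(1)]] T_Lambda[OF x_T]]
      by blast
    then have "a' = 0 \<or> b' = 0"
      using x a' b' by (auto simp: indecomposable_BZ_def)
    then show ?thesis
      using a' b' G_BZ_zero[OF f] by auto
  qed
  ultimately show ?thesis
    using x_T T by (auto simp: indecomposable_BZ_def)
qed

section \<open>Block permutations and the automorphism group\<close>

lemma fund_combination_permute:
  assumes "\<sigma> permutes {..<8}"
  shows "(\<Sum>i<8. c i *\<^sub>R fund (\<sigma> i)) = (\<Sum>j<8. c (inv \<sigma> j) *\<^sub>R fund j)"
  using sum.permute[OF assms, of "\<lambda>j. c (inv \<sigma> j) *\<^sub>R fund j"]
  by (simp add: permutes_inverses(2)[OF assms])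

lemma permuted_relation_iff:
  assumes \<sigma>: "\<sigma> permutes {..<8}"
  shows "(\<Sum>i<8. rel_coeff i *\<^sub>R fund (\<sigma> i)) = 0 \<longleftrightarrow> (\<forall>i<8. rel_coeff (\<sigma> i) = rel_coeff i)"
proof
  assume "(\<Sum>i<8. rel_coeff i *\<^sub>R fund (\<sigma> i)) = 0"
  then obtain t where t: "\<forall>j<8. rel_coeff (inv \<sigma> j) = t * rel_coeff j"
    unfolding fund_combination_permute[OF \<sigma>] fund_combination_eq_0_iff by blast
  have "1 = (\<Sum>j<8. rel_coeff (inv \<sigma> j))"
    using sum.permute[OF permutes_inv[OF \<sigma>], of rel_coeff] sum_rel_coeff by simp
  also have "\<dots> = t"
    using t sum_rel_coeff by (simp add: sum_distrib_left[symmetric])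
  finally have "\<forall>j<8. rel_coeff (inv \<sigma> j) = rel_coeff j"
    using t by simp
  then show "\<forall>i<8. rel_coeff (\<sigma> i) = rel_coeff i"
    using \<sigma> by (metis lessThan_iff permutes_in_image permutes_inverses(2))
next
  assume "\<forall>i<8. rel_coeff (\<sigma> i) = rel_coeff i"
  then have "(\<Sum>i<8. rel_coeff i *\<^sub>R fund (\<sigma> i)) = (\<Sum>i<8. ((\<lambda>j. rel_coeff j *\<^sub>R fund j) \<circ> \<sigma>) i)"
    by simp
  also have "\<dots> = (\<Sum>j<8. rel_coeff j *\<^sub>R fund j)"
    by (rule sum.permute[OF \<sigma>, symmetric])
  also have "\<dots> = 0"
    using fund_combination_eq_0_iff[of rel_coeff] by (metis mult_1)
  finally show "(\<Sum>i<8. rel_coeff i *\<^sub>R fund (\<sigma> i)) = 0" .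
qed

lemma rel_coeff_Ints: "i < 8 \<Longrightarrow> rel_coeff i \<in> \<int>"
  unfolding less_8_iff by (elim disjE) (simp_all add: rel_coeff_simps)

lemma block_perms_iff:
  "\<sigma> \<in> block_perms \<longleftrightarrow> \<sigma> permutes {..<8} \<and> (\<forall>i<8. rel_coeff (\<sigma> i) = rel_coeff i)"
proof -
  define F where "F r = {i\<in>{..<8}. rel_coeff i = r}" for r
  have "{0,1,2} = F 0" "{3,4,5} = F 1" "{6,7} = F (-1)"
    by (auto simp: F_def less_8_iff rel_coeff_simps)
  then have "\<sigma> \<in> block_perms \<longleftrightarrow> \<sigma> permutes {..<8} \<and> (\<forall>r\<in>{0, 1, -1}. \<sigma> ` F r = F r)"
    by (simp add: block_perms_def)
  also have "\<dots> \<longleftrightarrow> \<sigma> permutes {..<8} \<and> (\<forall>i<8. rel_coeff (\<sigma> i) = rel_coeff i)"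
  proof (intro conj_cong refl iffI allI impI ballI)
    fix i :: nat assume blocks: "\<forall>r\<in>{0, 1, -1}. \<sigma> ` F r = F r" and i: "i < 8"
    have "rel_coeff i \<in> {0, 1, -1}"
      using i rel_coeff_simps unfolding less_8_iff by auto
    moreover have "i \<in> F (rel_coeff i)"
      using i by (simp add: F_def)
    ultimately have "\<sigma> i \<in> F (rel_coeff i)"
      using blocks by blast
    then show "rel_coeff (\<sigma> i) = rel_coeff i"
      by (simp add: F_def)
  next
    fix r assume "\<sigma> permutes {..<8}" "\<forall>i<8. rel_coeff (\<sigma> i) = rel_coeff i"
    then show "\<sigma> ` F r = F r"
      unfolding F_def by (intro permutes_image_fibre) auto
  qed
  finally show ?thesis .
qed

lemma inv_in_block_perms:
  assumes "\<sigma> \<in> block_perms"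
  shows "inv \<sigma> \<in> block_perms"
proof -
  have \<sigma>: "\<sigma> permutes {..<8}" and rel: "\<forall>i<8. rel_coeff (\<sigma> i) = rel_coeff i"
    using assms by (simp_all add: block_perms_iff)
  have "rel_coeff (inv \<sigma> j) = rel_coeff j" if "j < 8" for j
    using rel permutes_in_image[OF permutes_inv[OF \<sigma>]] permutes_inverses(1)[OF \<sigma>] that
    by (metis lessThan_iff)
  then show ?thesis
    using permutes_inv[OF \<sigma>] by (simp add: block_perms_iff)
qed

definition relabel :: "(nat \<Rightarrow> nat) \<Rightarrow> real^9 \<Rightarrow> real^9" where
  "relabel \<sigma> x = (\<Sum>i<8. bz_coeff x i *\<^sub>R fund (\<sigma> i))"

text \<open>Two representations of a vector differ by a multiple of the relation, which a block
  permutation fixes; hence relabel may be computed from any representation.\<close>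

lemma relabel_fund_combination:
  assumes \<sigma>: "\<sigma> \<in> block_perms"
  shows "relabel \<sigma> (\<Sum>i<8. c i *\<^sub>R fund i) = (\<Sum>i<8. c i *\<^sub>R fund (\<sigma> i))"
proof -
  define x where "x = (\<Sum>i<8. c i *\<^sub>R fund i)"
  have "(\<Sum>i<8. (c i - bz_coeff x i) *\<^sub>R fund i) = 0"
    using V_BZ_fund_decomposition[OF fund_combination_in_V_BZ]
    by (simp add: x_def scaleR_diff_left sum_subtractf)
  then obtain t where t: "\<forall>i<8. c i - bz_coeff x i = t * rel_coeff i"
    unfolding fund_combination_eq_0_iff by blast
  have "(\<Sum>i<8. c i *\<^sub>R fund (\<sigma> i)) - relabel \<sigma> x = (\<Sum>i<8. (c i - bz_coeff x i) *\<^sub>R fund (\<sigma> i))"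
    by (simp add: relabel_def scaleR_diff_left sum_subtractf)
  also have "\<dots> = t *\<^sub>R (\<Sum>i<8. rel_coeff i *\<^sub>R fund (\<sigma> i))"
    using t by (simp add: scaleR_sum_right)
  also have "\<dots> = 0"
    using \<sigma> permuted_relation_iff by (simp add: block_perms_iff)
  finally show ?thesis
    by (simp add: x_def)
qed

lemma relabel_fund:
  assumes "\<sigma> \<in> block_perms" "i < 8"
  shows "relabel \<sigma> (fund i) = fund (\<sigma> i)"
proof -
  have "fund i = (\<Sum>k<8. (if k = i then 1 else 0) *\<^sub>R fund k)"
    using assms(2) by (simp add: if_distrib[of "\<lambda>t. t *\<^sub>R _"] cong: if_cong)
  then have "relabel \<sigma> (fund i) = (\<Sum>k<8. (if k = i then 1 else 0) *\<^sub>R fund (\<sigma> k))"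
    using relabel_fund_combination[OF assms(1)] by metis
  also have "\<dots> = fund (\<sigma> i)"
    using assms(2) by (simp add: if_distrib[of "\<lambda>t. t *\<^sub>R _"] cong: if_cong)
  finally show ?thesis .
qed

lemma relabel_add:
  assumes "\<sigma> \<in> block_perms" "x \<in> V_BZ" "y \<in> V_BZ"
  shows "relabel \<sigma> (x + y) = relabel \<sigma> x + relabel \<sigma> y"
proof -
  have "x + y = (\<Sum>i<8. (bz_coeff x i + bz_coeff y i) *\<^sub>R fund i)"
    using assms(2,3) V_BZ_fund_decomposition by (simp add: scaleR_add_left sum.distrib)
  then have "relabel \<sigma> (x + y) = (\<Sum>i<8. (bz_coeff x i + bz_coeff y i) *\<^sub>R fund (\<sigma> i))"
    using relabel_fund_combination[OF assms(1)] by metis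
  then show ?thesis
    by (simp add: relabel_def scaleR_add_left sum.distrib)
qed

lemma relabel_int_combination:
  assumes "\<sigma> \<in> block_perms"
  shows "relabel \<sigma> (\<Sum>i<8. of_int (c i) *\<^sub>R fund i) = (\<Sum>j<8. of_int (c (inv \<sigma> j)) *\<^sub>R fund j)"
  using assms by (simp add: relabel_fund_combination fund_combination_permute block_perms_iff)

lemma relabel_Lambda_BZ:
  assumes "\<sigma> \<in> block_perms" "x \<in> Lambda_BZ"
  shows "relabel \<sigma> x \<in> Lambda_BZ"
proof -
  obtain c :: "nat \<Rightarrow> int" where "x = (\<Sum>i<8. of_int (c i) *\<^sub>R fund i)"
    using assms(2) by (auto simp: Lambda_BZ_iff_int_combination)
  then have "relabel \<sigma> x = (\<Sum>j<8. of_int (c (inv \<sigma> j)) *\<^sub>R fund j)"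
    using relabel_int_combination[OF assms(1)] by simp
  then show ?thesis
    unfolding Lambda_BZ_iff_int_combination by (rule exI[of _ "\<lambda>j. c (inv \<sigma> j)"])
qed

lemma relabel_BZ_triangles:
  assumes \<sigma>: "\<sigma> \<in> block_perms" and x: "x \<in> BZ_triangles"
  shows "relabel \<sigma> x \<in> BZ_triangles"
proof -
  obtain c :: "nat \<Rightarrow> int" where c: "\<forall>i<8. 0 \<le> c i" "x = (\<Sum>i<8. of_int (c i) *\<^sub>R fund i)"
    using x by (auto simp: BZ_triangles_iff_nonneg_int_combination)
  have "inv \<sigma> j < 8" if "j < 8" for j
    using \<sigma> permutes_in_image[OF permutes_inv, of \<sigma> "{..<8}" j] that by (simp add: block_perms_iff)
  then have "\<forall>j<8. 0 \<le> c (inv \<sigma> j)"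
    using c(1) by simp
  then show ?thesis
    unfolding BZ_triangles_iff_nonneg_int_combination c(2) relabel_int_combination[OF \<sigma>]
    by (auto intro!: exI[of _ "\<lambda>j. c (inv \<sigma> j)"])
qed

lemma relabel_inv:
  assumes \<sigma>: "\<sigma> \<in> block_perms" and x: "x \<in> V_BZ"
  shows "relabel (inv \<sigma>) (relabel \<sigma> x) = x"
proof -
  have perm: "\<sigma> permutes {..<8}" "inv \<sigma> permutes {..<8}"
    using \<sigma> inv_in_block_perms[OF \<sigma>] by (simp_all add: block_perms_iff)
  have "relabel \<sigma> x = (\<Sum>j<8. bz_coeff x (inv \<sigma> j) *\<^sub>R fund j)"
    unfolding relabel_def by (rule fund_combination_permute[OF perm(1)])
  then have "relabel (inv \<sigma>) (relabel \<sigma> x)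
      = relabel (inv \<sigma>) (\<Sum>j<8. bz_coeff x (inv \<sigma> j) *\<^sub>R fund j)"
    by (rule arg_cong)
  also have "\<dots> = (\<Sum>j<8. bz_coeff x (inv \<sigma> j) *\<^sub>R fund (inv \<sigma> j))"
    by (rule relabel_fund_combination[OF inv_in_block_perms[OF \<sigma>]])
  also have "\<dots> = (\<Sum>i<8. bz_coeff x i *\<^sub>R fund i)"
    using sum.permute[OF perm(2), of "\<lambda>i. bz_coeff x i *\<^sub>R fund i"] by simp
  also have "\<dots> = x"
    by (rule V_BZ_fund_decomposition[OF x])
  finally show ?thesis .
qed

lemma relabel_inv_right:
  assumes \<sigma>: "\<sigma> \<in> block_perms" and y: "y \<in> V_BZ"
  shows "relabel \<sigma> (relabel (inv \<sigma>) y) = y"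
proof -
  have "\<sigma> permutes {..<8}"
    using \<sigma> by (simp add: block_perms_iff)
  then have "inv (inv \<sigma>) = \<sigma>"
    by (rule inv_inv_eq[OF permutes_bij])
  then show ?thesis
    using relabel_inv[OF inv_in_block_perms[OF \<sigma>] y] by simp
qed

lemma bij_betw_relabel_Lambda_BZ:
  assumes \<sigma>: "\<sigma> \<in> block_perms"
  shows "bij_betw (relabel \<sigma>) Lambda_BZ Lambda_BZ"
proof (rule bij_betw_byWitness[where f' = "relabel (inv \<sigma>)"])
  show "\<forall>x\<in>Lambda_BZ. relabel (inv \<sigma>) (relabel \<sigma> x) = x"
    using relabel_inv[OF \<sigma>] Lambda_BZ_subset_V_BZ by blast
  show "\<forall>y\<in>Lambda_BZ. relabel \<sigma> (relabel (inv \<sigma>) y) = y"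
    using relabel_inv_right[OF \<sigma>] Lambda_BZ_subset_V_BZ by blast
  show "relabel \<sigma> ` Lambda_BZ \<subseteq> Lambda_BZ" "relabel (inv \<sigma>) ` Lambda_BZ \<subseteq> Lambda_BZ"
    using relabel_Lambda_BZ[OF \<sigma>] relabel_Lambda_BZ[OF inv_in_block_perms[OF \<sigma>]] by blast+
qed

lemma relabel_image_BZ_triangles:
  assumes \<sigma>: "\<sigma> \<in> block_perms"
  shows "relabel \<sigma> ` BZ_triangles = BZ_triangles"
proof
  show "relabel \<sigma> ` BZ_triangles \<subseteq> BZ_triangles"
    using relabel_BZ_triangles[OF \<sigma>] by blast
  show "BZ_triangles \<subseteq> relabel \<sigma> ` BZ_triangles"
  proof
    fix y assume y: "y \<in> BZ_triangles"
    then have "y = relabel \<sigma> (relabel (inv \<sigma>) y)"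
      using relabel_inv_right[OF \<sigma>] BZ_triangles_subset_Lambda_BZ Lambda_BZ_subset_V_BZ by auto
    moreover have "relabel (inv \<sigma>) y \<in> BZ_triangles"
      using relabel_BZ_triangles[OF inv_in_block_perms[OF \<sigma>] y] .
    ultimately show "y \<in> relabel \<sigma> ` BZ_triangles"
      by blast
  qed
qed

lemma relabel_in_G_BZ:
  assumes \<sigma>: "\<sigma> \<in> block_perms"
  shows "restrict (relabel \<sigma>) Lambda_BZ \<in> G_BZ"
proof -
  have "restrict (relabel \<sigma>) Lambda_BZ ` BZ_triangles = relabel \<sigma> ` BZ_triangles"
    using BZ_triangles_subset_Lambda_BZ by (intro image_cong) auto
  moreover have "\<forall>x\<in>Lambda_BZ. \<forall>y\<in>Lambda_BZ. restrict (relabel \<sigma>) Lambda_BZ (x + y)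
      = restrict (relabel \<sigma>) Lambda_BZ x + restrict (relabel \<sigma>) Lambda_BZ y"
    using relabel_add[OF \<sigma>] Lambda_BZ_subset_V_BZ Lambda_BZ_add by auto
  ultimately show ?thesis
    using bij_betw_relabel_Lambda_BZ[OF \<sigma>] relabel_image_BZ_triangles[OF \<sigma>]
    unfolding G_BZ_def mem_Collect_eq by (simp only: bij_betw_restrict_eq restrict_extensional)
qed

lemma block_perm_ex1_G_BZ:
  assumes \<sigma>: "\<sigma> \<in> block_perms"
  shows "\<exists>!f. f \<in> G_BZ \<and> (\<forall>i<8. f (fund i) = fund (\<sigma> i))"
proof
  show "restrict (relabel \<sigma>) Lambda_BZ \<in> G_BZ \<and>
      (\<forall>i<8. restrict (relabel \<sigma>) Lambda_BZ (fund i) = fund (\<sigma> i))"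
    using relabel_in_G_BZ[OF \<sigma>] relabel_fund[OF \<sigma>] fund_in_Lambda_BZ by simp
  then show "f = restrict (relabel \<sigma>) Lambda_BZ"
    if "f \<in> G_BZ \<and> (\<forall>i<8. f (fund i) = fund (\<sigma> i))" for f
    using that G_BZ_eqI by (metis (no_types, lifting))
qed

lemma G_BZ_imp_block_perm:
  assumes f: "f \<in> G_BZ"
  shows "\<exists>\<sigma>\<in>block_perms. \<forall>i<8. f (fund i) = fund (\<sigma> i)"
proof -
  have "inj_on f (fund ` {..<8})"
    using G_BZ_inj_on[OF f] fund_in_Lambda_BZ by (auto intro: inj_on_subset)
  moreover have "f ` fund ` {..<8} \<subseteq> fund ` {..<8}"
    using G_BZ_preserves_indecomposable[OF f] indecomposable_BZ_iff by fastforce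
  ultimately obtain \<sigma> where \<sigma>: "\<sigma> permutes {..<8}" and f_fund: "\<forall>i<8. f (fund i) = fund (\<sigma> i)"
    using inj_on_self_map_induces_permutes[OF _ inj_on_fund] by (metis finite_lessThan lessThan_iff)
  have "0 = f (\<Sum>i<8. rel_coeff i *\<^sub>R fund i)"
    using fund_combination_eq_0_iff[of rel_coeff] G_BZ_zero[OF f] by auto
  also have "\<dots> = (\<Sum>i<8. rel_coeff i *\<^sub>R f (fund i))"
    using rel_coeff_Ints fund_in_Lambda_BZ by (intro G_BZ_Ints_combination[OF f]) auto
  also have "\<dots> = (\<Sum>i<8. rel_coeff i *\<^sub>R fund (\<sigma> i))"
    using f_fund by simp
  finally have "\<sigma> \<in> block_perms"
    using \<sigma> permuted_relation_iff[OF \<sigma>] by (simp add: block_perms_iff)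
  then show ?thesis
    using f_fund by blast
qed

lemma G_BZ_eq_relabel_image: "G_BZ = (\<lambda>\<sigma>. restrict (relabel \<sigma>) Lambda_BZ) ` block_perms"
proof
  show "G_BZ \<subseteq> (\<lambda>\<sigma>. restrict (relabel \<sigma>) Lambda_BZ) ` block_perms"
  proof
    fix f assume f: "f \<in> G_BZ"
    then obtain \<sigma> where \<sigma>: "\<sigma> \<in> block_perms" and "\<forall>i<8. f (fund i) = fund (\<sigma> i)"
      using G_BZ_imp_block_perm by blast
    then have "f = restrict (relabel \<sigma>) Lambda_BZ"
      using G_BZ_eqI[OF f relabel_in_G_BZ[OF \<sigma>]] fund_in_Lambda_BZ relabel_fund[OF \<sigma>] by simp
    then show "f \<in> (\<lambda>\<sigma>. restrict (relabel \<sigma>) Lambda_BZ) ` block_perms"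
      using \<sigma> by blast
  qed
  show "(\<lambda>\<sigma>. restrict (relabel \<sigma>) Lambda_BZ) ` block_perms \<subseteq> G_BZ"
    using relabel_in_G_BZ by blast
qed

lemma inj_on_relabel: "inj_on (\<lambda>\<sigma>. restrict (relabel \<sigma>) Lambda_BZ) block_perms"
proof (rule inj_onI)
  fix \<sigma> \<tau> assume \<sigma>: "\<sigma> \<in> block_perms" and \<tau>: "\<tau> \<in> block_perms"
    and eq: "restrict (relabel \<sigma>) Lambda_BZ = restrict (relabel \<tau>) Lambda_BZ"
  have perm: "\<sigma> permutes {..<8}" "\<tau> permutes {..<8}"
    using \<sigma> \<tau> by (simp_all add: block_perms_iff)
  have "\<sigma> i = \<tau> i" if "i < 8" for i
  proof -
    have "fund (\<sigma> i) = fund (\<tau> i)"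
      using fun_cong[OF eq, of "fund i"] relabel_fund[OF \<sigma> that] relabel_fund[OF \<tau> that]
        fund_in_Lambda_BZ[OF that] by simp
    then show ?thesis
      using inj_onD[OF inj_on_fund] permutes_in_image[OF perm(1)] permutes_in_image[OF perm(2)] that
      by simp
  qed
  then show "\<sigma> = \<tau>"
    using perm by (metis lessThan_iff permutes_not_in ext)
qed

lemma card_block_perms: "card block_perms = 72"
proof -
  let ?\<X> = "{{0,1,2}, {3,4,5}, {6,7}} :: nat set set"
  have "\<Union>?\<X> = {..<8}"
    by auto
  then have "card block_perms = card {p. p permutes \<Union>?\<X> \<and> (\<forall>X\<in>?\<X>. p ` X = X)}"
    by (simp add: block_perms_def)
  also have "\<dots> = (\<Prod>X\<in>?\<X>. fact (card X))"
    by (rule card_permutes_stabilising_blocks) (auto simp: pairwise_def disjnt_def)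
  also have "\<dots> = 72"
  proof -
    have "{0,1,2::nat} \<notin> {{3,4,5},{6,7}}" "{3,4,5::nat} \<notin> {{6,7}}"
      by (auto simp: set_eq_iff)
    then show ?thesis
      by (simp add: eval_nat_numeral)
  qed
  finally show ?thesis .
qed

lemma card_G_BZ: "card G_BZ = 72"
  using card_image[OF inj_on_relabel] card_block_perms by (simp add: G_BZ_eq_relabel_image)

theorem mainTheorem2:
  shows "{R. extreme_ray_of R C_BZ} = ray ` fund ` {..<8}
       \<and> card (ray ` fund ` {..<8}) = 8
       \<and> Lambda_BZ = {x. \<exists>c :: nat \<Rightarrow> int. x = (\<Sum>i<8. of_int (c i) *\<^sub>R fund i)}
       \<and> (\<forall>c :: nat \<Rightarrow> real. (\<Sum>i<8. c i *\<^sub>R fund i) = 0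
              \<longleftrightarrow> (\<exists>t. \<forall>i<8. c i = t * rel_coeff i))
       \<and> card G_BZ = 72
       \<and> (\<forall>f\<in>G_BZ. \<exists>\<sigma>\<in>block_perms. \<forall>i<8. f (fund i) = fund (\<sigma> i))
       \<and> (\<forall>\<sigma>\<in>block_perms. \<exists>!f. f \<in> G_BZ \<and> (\<forall>i<8. f (fund i) = fund (\<sigma> i)))"
proof (intro conjI)
  show "{R. extreme_ray_of R C_BZ} = ray ` fund ` {..<8}"
    by (rule extreme_rays_C_BZ)
  show "card (ray ` fund ` {..<8}) = 8"
    by (rule card_fund_rays)
  show "Lambda_BZ = {x. \<exists>c :: nat \<Rightarrow> int. x = (\<Sum>i<8. of_int (c i) *\<^sub>R fund i)}"
    using Lambda_BZ_iff_int_combination by blast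
  show "\<forall>c :: nat \<Rightarrow> real. (\<Sum>i<8. c i *\<^sub>R fund i) = 0 \<longleftrightarrow> (\<exists>t. \<forall>i<8. c i = t * rel_coeff i)"
    using fund_combination_eq_0_iff by blast
  show "card G_BZ = 72"
    by (rule card_G_BZ)
  show "\<forall>f\<in>G_BZ. \<exists>\<sigma>\<in>block_perms. \<forall>i<8. f (fund i) = fund (\<sigma> i)"
    using G_BZ_imp_block_perm by blast
  show "\<forall>\<sigma>\<in>block_perms. \<exists>!f. f \<in> G_BZ \<and> (\<forall>i<8. f (fund i) = fund (\<sigma> i))"
    using block_perm_ex1_G_BZ by blast
qed

end
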